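(* Let $\widetilde{\mathcal M}$ be any single-demand diffusion auction mechanism and $\mathcal M$ the multi-demand mechanism obtained from it by the reduction. If $\widetilde{\mathcal M}$ is individually rational (resp. non-deficit, non-wasteful, efficient), then $\mathcal M$ is individually rational (resp. non-deficit, non-wasteful, efficient).
   Context: Single-demand model: a seller $s$ with $m\ge1$ identical items and a fixed neighbour set; buyers each want at most one item, have true valuation $v\ge0$ and true neighbour set, report a valuation $v'\ge 0$ and a subset of the true neighbour set; the profile graph has an edge $(x,y)$ iff $y$ is in the reported (for $s$: fixed) neighbour set of $x$; unreachable buyers get no item and pay $0$. A single-demand mechanism outputs $\pi_i\in\{0,1\}$ and $p_i\in\mathbb{R}$; utility $v_i\pi_i-p_i$. IR: every truthfully reporting buyer has nonnegative utility whatever the others report. ND: total payments $\ge0$ for every report profile. NW: number of items allocated $=\min\{m,\#\text{reachable buyers}\}$ for every report profile. Efficient: under truthful reports, $\sum_i v_i\pi_i$ equals the sum of the $m$ largest true valuations. Multi-demand model: same seller; buyers $B=\{1,\dots,n\}$; buyer $i$ has true profile $\eta_i=(\vec v_i,t_i)$ with $\vec v_i=(v_{i,1},\dots,v_{i,m})$, $v_{i,1}\ge\dots\ge v_{i,m}\ge0$ ($v_{i,j}$ is the value of its $j$-th item) and neighbour set $t_i\subseteq B$; it reports $\eta'_i=(\vec v'_i,t'_i)$ with $\vec v'_i\in\mathbb{R}^m_{\ge0}$, $t'_i\subseteq t_i$. A multi-demand mechanism outputs $\pi_{i,j}\in\{0,1\}$, $p_{i,j}\in\mathbb{R}$ ($1\le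 j\le m$); utility $u_i=\sum_j(v_{i,j}\pi_{i,j}-p_{i,j})$; revenue $\sum_{i,j}p_{i,j}$. IR, ND are as in the single-demand case; NW: $\sum_{i,j}\pi_{i,j}=\min\{m,\,m\cdot\#\text{reachable buyers}\}$; efficient: under truthful reports $\sum_{i,j}v_{i,j}\pi_{i,j}$ equals the sum of the $m$ largest values among all $v_{i,j}$. Reduction: given a multi-demand report profile $\eta'$, build a single-demand instance with buyer set $\widetilde B=\{i_j: i\in B,1\le j\le m\}$. Copy $i_j$ has true valuation $v_{i,j}$ and reported valuation $v'_{i,j}$. Neighbour sets: $i_j$ has neighbour $i_{j+1}$ for $j<m$ (both true and reported); $i_m$ has true neighbours $\{k_1:k\in t_i\}$ and reported neighbours $\{k_1:k\in t'_i\}$; the seller's neighbour set is $\{i_1: i\in r_s\}$. Each copy $i_j$ receives the priority of $i$. Apply $\widetilde{\mathcal M}$ to the resulting single-demand profile $\theta'$ and set $\pi_{i,j}(\eta')=\tilde\pi_{i_j}(\theta')$, $p_{i,j}(\eta')=\tilde p_{i_j}(\theta')$. *)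

theory Defs
  imports Complex_Main
begin

text \<open>Buyers reachable from the seller in the graph whose edges are given by the
  neighbour function t (the seller's neighbour set is rs); B is the buyer set.\<close>
inductive_set reach :: "'a set \<Rightarrow> 'a set \<Rightarrow> ('a \<Rightarrow> 'a set) \<Rightarrow> 'a set"
  for B :: "'a set" and rs :: "'a set" and t :: "'a \<Rightarrow> 'a set" where
  seller_nbr: "x \<in> rs \<Longrightarrow> x \<in> B \<Longrightarrow> x \<in> reach B rs t"
| step: "x \<in> reach B rs t \<Longrightarrow> y \<in> t x \<Longrightarrow> y \<in> B \<Longrightarrow> y \<in> reach B rs t"

definition top_sum :: "nat \<Rightarrow> 'a set \<Rightarrow> ('a \<Rightarrow> real) \<Rightarrow> real" where
  "top_sum m A f = Max ((\<lambda>S. sum f S) ` {S. S \<subseteq> A \<and> card S = min m (card A)})"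

text \<open>Environment: number of items m, finite buyer set B, seller's neighbour set rs.\<close>
definition env_ok :: "nat \<Rightarrow> 'a set \<Rightarrow> 'a set \<Rightarrow> bool" where
  "env_ok m B rs \<longleftrightarrow> 1 \<le> m \<and> finite B \<and> rs \<subseteq> B"

text \<open>A single-demand mechanism gets m, the buyer set, the seller's neighbour set,
  a priority function on buyers, the reported valuations and reported neighbour sets;
  it returns the allocation (True = gets an item) and the payments.\<close>
type_synonym 'c sd_mech =
  "nat \<Rightarrow> 'c set \<Rightarrow> 'c set \<Rightarrow> ('c \<Rightarrow> nat) \<Rightarrow> ('c \<Rightarrow> real) \<Rightarrow> ('c \<Rightarrow> 'c set)
     \<Rightarrow> ('c \<Rightarrow> bool) \<times> ('c \<Rightarrow> real)"

text \<open>True profile (v,t), report profile (v',t').\<close>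
definition sd_feasible :: "'c set \<Rightarrow> ('c \<Rightarrow> real) \<Rightarrow> ('c \<Rightarrow> 'c set) \<Rightarrow> ('c \<Rightarrow> real) \<Rightarrow> ('c \<Rightarrow> 'c set) \<Rightarrow> bool" where
  "sd_feasible B v t v' t' \<longleftrightarrow>
     (\<forall>c\<in>B. 0 \<le> v c \<and> 0 \<le> v' c \<and> t c \<subseteq> B \<and> t' c \<subseteq> t c)"

definition sd_mechanism :: "'c sd_mech \<Rightarrow> bool" where
  "sd_mechanism M \<longleftrightarrow>
     (\<forall>m B rs prio v t v' t' c. env_ok m B rs \<and> sd_feasible B v t v' t' \<and>
        c \<in> B \<and> c \<notin> reach B rs t' \<longrightarrow>
        \<not> fst (M m B rs prio v' t') c \<and> snd (M m B rs prio v' t') c = 0)"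

definition sd_IR :: "'c sd_mech \<Rightarrow> bool" where
  "sd_IR M \<longleftrightarrow>
     (\<forall>m B rs prio v t v' t' c. env_ok m B rs \<and> sd_feasible B v t v' t' \<and>
        c \<in> B \<and> v' c = v c \<and> t' c = t c \<longrightarrow>
        0 \<le> (if fst (M m B rs prio v' t') c then v c else 0) - snd (M m B rs prio v' t') c)"

definition sd_ND :: "'c sd_mech \<Rightarrow> bool" where
  "sd_ND M \<longleftrightarrow>
     (\<forall>m B rs prio v t v' t'. env_ok m B rs \<and> sd_feasible B v t v' t' \<longrightarrow>
        0 \<le> (\<Sum>c\<in>B. snd (M m B rs prio v' t') c))"

definition sd_NW :: "'c sd_mech \<Rightarrow> bool" where
  "sd_NW M \<longleftrightarrow>
     (\<forall>m B rs prio v t v' t'. env_ok m B rs \<and> sd_feasible B v t v' t' \<longrightarrow>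
        card {c\<in>B. fst (M m B rs prio v' t') c} = min m (card (reach B rs t')))"

definition sd_EFF :: "'c sd_mech \<Rightarrow> bool" where
  "sd_EFF M \<longleftrightarrow>
     (\<forall>m B rs prio v t. env_ok m B rs \<and> sd_feasible B v t v t \<longrightarrow>
        (\<Sum>c\<in>B. if fst (M m B rs prio v t) c then v c else 0) = top_sum m (reach B rs t) v)"

text \<open>Valuation vectors are functions 'b => nat => real, the j-th item value
  being at index j, 1 <= j <= m.\<close>
type_synonym 'b md_mech =
  "nat \<Rightarrow> 'b set \<Rightarrow> 'b set \<Rightarrow> ('b \<Rightarrow> nat) \<Rightarrow> ('b \<Rightarrow> nat \<Rightarrow> real) \<Rightarrow> ('b \<Rightarrow> 'b set)
     \<Rightarrow> ('b \<Rightarrow> nat \<Rightarrow> bool) \<times> ('b \<Rightarrow> nat \<Rightarrow> real)"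

definition md_feasible :: "nat \<Rightarrow> 'b set \<Rightarrow> ('b \<Rightarrow> nat \<Rightarrow> real) \<Rightarrow> ('b \<Rightarrow> 'b set)
    \<Rightarrow> ('b \<Rightarrow> nat \<Rightarrow> real) \<Rightarrow> ('b \<Rightarrow> 'b set) \<Rightarrow> bool" where
  "md_feasible m B v t v' t' \<longleftrightarrow>
     (\<forall>i\<in>B. (\<forall>j\<in>{1..m}. 0 \<le> v i j \<and> 0 \<le> v' i j) \<and>
            (\<forall>j\<in>{1..<m}. v i (j + 1) \<le> v i j) \<and>
            t i \<subseteq> B \<and> t' i \<subseteq> t i)"

definition md_IR :: "'b md_mech \<Rightarrow> bool" where
  "md_IR M \<longleftrightarrow>
     (\<forall>m B rs prio v t v' t' i. env_ok m B rs \<and> md_feasible m B v t v' t' \<and>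
        i \<in> B \<and> (\<forall>j\<in>{1..m}. v' i j = v i j) \<and> t' i = t i \<longrightarrow>
        0 \<le> (\<Sum>j\<in>{1..m}. (if fst (M m B rs prio v' t') i j then v i j else 0)
                          - snd (M m B rs prio v' t') i j))"

definition md_ND :: "'b md_mech \<Rightarrow> bool" where
  "md_ND M \<longleftrightarrow>
     (\<forall>m B rs prio v t v' t'. env_ok m B rs \<and> md_feasible m B v t v' t' \<longrightarrow>
        0 \<le> (\<Sum>i\<in>B. \<Sum>j\<in>{1..m}. snd (M m B rs prio v' t') i j))"

definition md_NW :: "'b md_mech \<Rightarrow> bool" where
  "md_NW M \<longleftrightarrow>
     (\<forall>m B rs prio v t v' t'. env_ok m B rs \<and> md_feasible m B v t v' t' \<longrightarrow>
        card {(i, j). i \<in> B \<and> j \<in> {1..m} \<and> fst (M m B rs prio v' t') i j}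
          = min m (m * card (reach B rs t')))"

definition md_EFF :: "'b md_mech \<Rightarrow> bool" where
  "md_EFF M \<longleftrightarrow>
     (\<forall>m B rs prio v t. env_ok m B rs \<and> md_feasible m B v t v t \<longrightarrow>
        (\<Sum>i\<in>B. \<Sum>j\<in>{1..m}. if fst (M m B rs prio v t) i j then v i j else 0)
          = top_sum m (reach B rs t \<times> {1..m}) (\<lambda>(i, j). v i j))"

text \<open>Copy i_j is the pair (i, j); i_j points to i_(j+1) for j < m, and i_m points to
  the first copies of the reported neighbours of i.\<close>
definition reduce :: "('b \<times> nat) sd_mech \<Rightarrow> 'b md_mech" where
  "reduce M m B rs prio v' t' =
     (let Bc = B \<times> {1..m};
          rsc = (\<lambda>i. (i, 1)) ` rs;
          prioc = (\<lambda>(i, j). prio i);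
          vc = (\<lambda>(i, j). v' i j);
          tc = (\<lambda>(i, j). if j < m then {(i, j + 1)} else (\<lambda>k. (k, 1)) ` t' i);
          res = M m Bc rsc prioc vc tc
      in (\<lambda>i j. fst res (i, j), \<lambda>i j. snd res (i, j)))"

end

theory Submission
  imports Defs
begin

text \<open>In the copy graph buyer i becomes the chain i_1 \<rightarrow> \<dots> \<rightarrow> i_m, entered at i_1 and left
  at i_m, so a copy is reachable exactly when its buyer is. The copy instance thus has m
  reachable copies per reachable buyer, and its reachable valuations are exactly the values
  v i j of reachable buyers. Each property of the single-demand mechanism on the copy
  instance then reads off directly, since allocations, payments and utilities of buyer i
  are sums over its copies.\<close>

abbreviation copy_nbrs :: "nat \<Rightarrow> ('b \<Rightarrow> 'b set) \<Rightarrow> 'b \<times> nat \<Rightarrow> ('b \<times> nat) set" where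
  "copy_nbrs m t \<equiv> \<lambda>(i, j). if j < m then {(i, j + 1)} else (\<lambda>k. (k, 1)) ` t i"

definition copy_run :: "('b \<times> nat) sd_mech \<Rightarrow> nat \<Rightarrow> 'b set \<Rightarrow> 'b set \<Rightarrow> ('b \<Rightarrow> nat)
    \<Rightarrow> ('b \<Rightarrow> nat \<Rightarrow> real) \<Rightarrow> ('b \<Rightarrow> 'b set) \<Rightarrow> ('b \<times> nat \<Rightarrow> bool) \<times> ('b \<times> nat \<Rightarrow> real)" where
  "copy_run M m B rs prio v' t' =
     M m (B \<times> {1..m}) ((\<lambda>i. (i, 1)) ` rs) (\<lambda>(i, j). prio i) (\<lambda>(i, j). v' i j) (copy_nbrs m t')"

lemma reduce_fst: "fst (reduce M m B rs prio v' t') i j = fst (copy_run M m B rs prio v' t') (i, j)"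
  by (simp add: reduce_def copy_run_def Let_def)

lemma reduce_snd: "snd (reduce M m B rs prio v' t') i j = snd (copy_run M m B rs prio v' t') (i, j)"
  by (simp add: reduce_def copy_run_def Let_def)

lemma env_ok_copies: "env_ok m B rs \<Longrightarrow> env_ok m (B \<times> {1..m}) ((\<lambda>i. (i, 1)) ` rs)"
  unfolding env_ok_def by auto

lemma sd_feasible_copies:
  assumes "md_feasible m B v t v' t'"
  shows "sd_feasible (B \<times> {1..m}) (\<lambda>(i, j). v i j) (copy_nbrs m t) (\<lambda>(i, j). v' i j) (copy_nbrs m t')"
  using assms unfolding md_feasible_def sd_feasible_def by (auto split: if_splits)

lemma reach_subset: "reach B rs t \<subseteq> B"
  by (auto elim: reach.cases)

lemma reach_copy_chain:
  assumes "(i, 1) \<in> reach (B \<times> {1..m}) rsc (copy_nbrs m t)" "i \<in> B" "1 \<le> j" "j \<le> m"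
  shows "(i, j) \<in> reach (B \<times> {1..m}) rsc (copy_nbrs m t)"
  using \<open>1 \<le> j\<close> \<open>j \<le> m\<close>
proof (induction j rule: dec_induct)
  case base
  show ?case using assms(1) .
next
  case (step j)
  have "(i, Suc j) \<in> copy_nbrs m t (i, j)" "(i, Suc j) \<in> B \<times> {1..m}"
    using step \<open>i \<in> B\<close> by auto
  with step show ?case by (auto intro: reach.step)
qed

lemma reach_copies_subset:
  assumes "1 \<le> m"
  shows "reach (B \<times> {1..m}) ((\<lambda>i. (i, 1)) ` rs) (copy_nbrs m t) \<subseteq> reach B rs t \<times> {1..m}"
proof
  fix c assume "c \<in> reach (B \<times> {1..m}) ((\<lambda>i. (i, 1)) ` rs) (copy_nbrs m t)"
  then show "c \<in> reach B rs t \<times> {1..m}"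
  proof induction
    case (seller_nbr c)
    then obtain i where "c = (i, 1)" "i \<in> rs" "i \<in> B" by auto
    then show ?case using assms reach.seller_nbr by simp
  next
    case (step c d)
    obtain i j where c: "c = (i, j)" by fastforce
    with step have i: "i \<in> reach B rs t" by simp
    show ?case
    proof (cases "j < m")
      case True
      then show ?thesis using step c i by simp
    next
      case False
      then obtain k where "d = (k, 1)" "k \<in> t i" using step c by auto
      moreover from this have "k \<in> reach B rs t" using step reach.step[OF i] by simp
      ultimately show ?thesis using assms by simp
    qed
  qed
qed

lemma reach_first_copy:
  assumes "1 \<le> m" "i \<in> reach B rs t"
  shows "(i, 1) \<in> reach (B \<times> {1..m}) ((\<lambda>i. (i, 1)) ` rs) (copy_nbrs m t)"
  using assms(2)
proof induction
  case (seller_nbr i)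
  have "(i, 1) \<in> (\<lambda>i. (i, 1)) ` rs" "(i, 1) \<in> B \<times> {1..m}" using seller_nbr assms(1) by auto
  then show ?case by (rule reach.seller_nbr)
next
  case (step i k)
  have "i \<in> B" using step.hyps(1) by (rule subsetD[OF reach_subset])
  with step.IH have "(i, m) \<in> reach (B \<times> {1..m}) ((\<lambda>i. (i, 1)) ` rs) (copy_nbrs m t)"
    using assms(1) by (rule reach_copy_chain) simp
  moreover have "(k, 1) \<in> copy_nbrs m t (i, m)" "(k, 1) \<in> B \<times> {1..m}"
    using step assms(1) by auto
  ultimately show ?case by (rule reach.step)
qed

lemma reach_copies:
  assumes "1 \<le> m"
  shows "reach (B \<times> {1..m}) ((\<lambda>i. (i, 1)) ` rs) (copy_nbrs m t) = reach B rs t \<times> {1..m}"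
proof
  show "reach B rs t \<times> {1..m} \<subseteq> reach (B \<times> {1..m}) ((\<lambda>i. (i, 1)) ` rs) (copy_nbrs m t)"
  proof clarify
    fix i j assume i: "i \<in> reach B rs t" and "j \<in> {1..m}"
    then have "1 \<le> j" "j \<le> m" by auto
    moreover have "i \<in> B" using i by (rule subsetD[OF reach_subset])
    ultimately show "(i, j) \<in> reach (B \<times> {1..m}) ((\<lambda>i. (i, 1)) ` rs) (copy_nbrs m t)"
      using reach_copy_chain[OF reach_first_copy[OF assms i]] by simp
  qed
qed (rule reach_copies_subset[OF assms])

lemma card_reach_copies:
  assumes "env_ok m B rs"
  shows "card (reach (B \<times> {1..m}) ((\<lambda>i. (i, 1)) ` rs) (copy_nbrs m t)) = m * card (reach B rs t)"
proof -
  have "finite (reach B rs t)"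
    using assms unfolding env_ok_def by (blast intro: finite_subset[OF reach_subset])
  moreover have "1 \<le> m" using assms by (simp add: env_ok_def)
  ultimately show ?thesis unfolding reach_copies[OF \<open>1 \<le> m\<close>] by (simp add: card_cartesian_product)
qed

lemma reduce_IR:
  fixes M :: "('b \<times> nat) sd_mech"
  shows "sd_IR M \<Longrightarrow> md_IR (reduce M)"
  unfolding md_IR_def
proof (intro allI impI)
  fix m B rs prio v t v' t' and i :: 'b
  assume "sd_IR M" and a: "env_ok m B rs \<and> md_feasible m B v t v' t' \<and>
      i \<in> B \<and> (\<forall>j\<in>{1..m}. v' i j = v i j) \<and> t' i = t i"
  have env: "env_ok m (B \<times> {1..m}) ((\<lambda>i. (i, 1)) ` rs)"
    and feas: "sd_feasible (B \<times> {1..m}) (\<lambda>(i, j). v i j) (copy_nbrs m t) (\<lambda>(i, j). v' i j) (copy_nbrs m t')"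
    using a env_ok_copies sd_feasible_copies by blast+
  have copy_IR: "0 \<le> (if fst (copy_run M m B rs prio v' t') (i, j) then v i j else 0)
      - snd (copy_run M m B rs prio v' t') (i, j)" if "j \<in> {1..m}" for j
  proof -
    have "(\<lambda>(i, j). v' i j) (i, j) = (\<lambda>(i, j). v i j) (i, j)" "copy_nbrs m t' (i, j) = copy_nbrs m t (i, j)"
      using a that by auto
    with env feas a that have "0 \<le> (if fst (copy_run M m B rs prio v' t') (i, j) then (\<lambda>(i, j). v i j) (i, j) else 0)
        - snd (copy_run M m B rs prio v' t') (i, j)"
      unfolding copy_run_def
      by (intro \<open>sd_IR M\<close>[unfolded sd_IR_def, rule_format, where v = "\<lambda>(i, j). v i j" and t = "copy_nbrs m t"]) simp
    then show ?thesis by (simp only: case_prod_conv)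
  qed
  show "0 \<le> (\<Sum>j\<in>{1..m}. (if fst (reduce M m B rs prio v' t') i j then v i j else 0)
      - snd (reduce M m B rs prio v' t') i j)"
    unfolding reduce_fst reduce_snd using copy_IR by (rule sum_nonneg)
qed

lemma reduce_ND:
  fixes M :: "('b \<times> nat) sd_mech"
  shows "sd_ND M \<Longrightarrow> md_ND (reduce M)"
  unfolding md_ND_def
proof (intro allI impI)
  fix m and B rs :: "'b set" and prio v t v' t'
  assume "sd_ND M" and a: "env_ok m B rs \<and> md_feasible m B v t v' t'"
  then have "0 \<le> (\<Sum>c\<in>B \<times> {1..m}. snd (copy_run M m B rs prio v' t') c)"
    using env_ok_copies sd_feasible_copies unfolding sd_ND_def copy_run_def by blast
  then show "0 \<le> (\<Sum>i\<in>B. \<Sum>j\<in>{1..m}. snd (reduce M m B rs prio v' t') i j)"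
    by (simp add: reduce_snd sum.cartesian_product)
qed

lemma reduce_NW:
  fixes M :: "('b \<times> nat) sd_mech"
  shows "sd_NW M \<Longrightarrow> md_NW (reduce M)"
  unfolding md_NW_def
proof (intro allI impI)
  fix m and B rs :: "'b set" and prio v t v' t'
  assume "sd_NW M" and a: "env_ok m B rs \<and> md_feasible m B v t v' t'"
  then have "card {c \<in> B \<times> {1..m}. fst (copy_run M m B rs prio v' t') c}
      = min m (card (reach (B \<times> {1..m}) ((\<lambda>i. (i, 1)) ` rs) (copy_nbrs m t')))"
    using env_ok_copies sd_feasible_copies unfolding sd_NW_def copy_run_def by blast
  moreover have "{(i, j). i \<in> B \<and> j \<in> {1..m} \<and> fst (reduce M m B rs prio v' t') i j}
      = {c \<in> B \<times> {1..m}. fst (copy_run M m B rs prio v' t') c}"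
    by (auto simp: reduce_fst)
  ultimately show "card {(i, j). i \<in> B \<and> j \<in> {1..m} \<and> fst (reduce M m B rs prio v' t') i j}
      = min m (m * card (reach B rs t'))"
    using a card_reach_copies[of m B rs t'] by simp
qed

lemma reduce_EFF:
  fixes M :: "('b \<times> nat) sd_mech"
  shows "sd_EFF M \<Longrightarrow> md_EFF (reduce M)"
  unfolding md_EFF_def
proof (intro allI impI)
  fix m and B rs :: "'b set" and prio v t
  assume "sd_EFF M" and a: "env_ok m B rs \<and> md_feasible m B v t v t"
  then have "(\<Sum>c\<in>B \<times> {1..m}. if fst (copy_run M m B rs prio v t) c then (\<lambda>(i, j). v i j) c else 0)
      = top_sum m (reach (B \<times> {1..m}) ((\<lambda>i. (i, 1)) ` rs) (copy_nbrs m t)) (\<lambda>(i, j). v i j)"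
    using env_ok_copies sd_feasible_copies unfolding sd_EFF_def copy_run_def by blast
  moreover have "(\<Sum>i\<in>B. \<Sum>j\<in>{1..m}. if fst (reduce M m B rs prio v t) i j then v i j else 0)
      = (\<Sum>c\<in>B \<times> {1..m}. if fst (copy_run M m B rs prio v t) c then (\<lambda>(i, j). v i j) c else 0)"
    unfolding sum.cartesian_product reduce_fst by (rule sum.cong) auto
  moreover have "1 \<le> m" using a by (simp add: env_ok_def)
  ultimately show "(\<Sum>i\<in>B. \<Sum>j\<in>{1..m}. if fst (reduce M m B rs prio v t) i j then v i j else 0)
      = top_sum m (reach B rs t \<times> {1..m}) (\<lambda>(i, j). v i j)"
    by (simp only: reach_copies)
qed

text \<open>The standing convention on unreachable buyers is not needed for the transfer.\<close>

theorem mainTheorem9: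
  fixes M :: "('b \<times> nat) sd_mech"
  assumes "sd_mechanism M"
  shows "(sd_IR M \<longrightarrow> md_IR (reduce M)) \<and>
         (sd_ND M \<longrightarrow> md_ND (reduce M)) \<and>
         (sd_NW M \<longrightarrow> md_NW (reduce M)) \<and>
         (sd_EFF M \<longrightarrow> md_EFF (reduce M))"
  using reduce_IR reduce_ND reduce_NW reduce_EFF by blast

end
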